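(* Let $f:G\to H$ be a locally sectionable group homomorphism. Then $\sigma(H)\leq \mathrm{sec}(f)\leq \sigma_c(H)$. In particular, if $\sigma(H)=\sigma_c(H)$, then $\mathrm{sec}(f)=\sigma_c(H)=\sigma(H)$.
   Context: For a homomorphism $f:G\to H$ and a subgroup $L\le H$, a local section of $f$ on $L$ is a homomorphism $s:L\to G$ with $f\circ s=\mathrm{incl}_L$ (the inclusion $L\hookrightarrow H$). $f$ is locally sectionable if for every $b\in H$, $b\neq 1$, there is a subgroup $L\le H$ containing $b$ on which $f$ admits a local section. The sectional number $\mathrm{sec}(f)$ is the least positive integer $m$ such that there exist proper subgroups $H_1,\ldots,H_m$ of $H$ with $H=H_1\cup\cdots\cup H_m$ and such that $f$ admits a local section on each $H_i$; $\mathrm{sec}(f)=\infty$ if no such $m$ exists. The covering number $\sigma(H)$ is the least positive integer $m$ such that $H$ is a union of $m$ proper subgroups, and the cyclic covering number $\sigma_c(H)$ is the least positive integer $m$ such that $H$ is a union of $m$ cyclic proper subgroups (each being $\infty$ if no such $m$ exists). *)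

theory Defs
  imports "HOL-Algebra.Algebra" "HOL-Library.Extended_Nat"
begin

definition local_section_on ::
  "('a, 'c) monoid_scheme \<Rightarrow> ('b, 'd) monoid_scheme \<Rightarrow> ('a \<Rightarrow> 'b) \<Rightarrow> 'b set \<Rightarrow> bool" where
  "local_section_on G H f L \<longleftrightarrow>
     (\<exists>s. s \<in> hom (H\<lparr>carrier := L\<rparr>) G \<and> (\<forall>x\<in>L. f (s x) = x))"

definition locally_sectionable ::
  "('a, 'c) monoid_scheme \<Rightarrow> ('b, 'd) monoid_scheme \<Rightarrow> ('a \<Rightarrow> 'b) \<Rightarrow> bool" where
  "locally_sectionable G H f \<longleftrightarrow>
     (\<forall>b\<in>carrier H. b \<noteq> \<one>\<^bsub>H\<^esub> \<longrightarrow>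
        (\<exists>L. subgroup L H \<and> b \<in> L \<and> local_section_on G H f L))"

text \<open>Least positive m such that carrier H is the union of m proper subgroups each
  satisfying P; infinity (Inf of the empty set in enat) if no such m exists.\<close>
definition cover_number :: "('b, 'd) monoid_scheme \<Rightarrow> ('b set \<Rightarrow> bool) \<Rightarrow> enat" where
  "cover_number H P = Inf {enat m | m. m > 0 \<and>
     (\<exists>Hs :: nat \<Rightarrow> 'b set. (\<forall>i<m. subgroup (Hs i) H \<and> Hs i \<noteq> carrier H \<and> P (Hs i))
        \<and> (\<Union>i<m. Hs i) = carrier H)}"

definition sectional_number ::
  "('a, 'c) monoid_scheme \<Rightarrow> ('b, 'd) monoid_scheme \<Rightarrow> ('a \<Rightarrow> 'b) \<Rightarrow> enat" where
  "sectional_number G H f = cover_number H (local_section_on G H f)"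

definition covering_number :: "('b, 'd) monoid_scheme \<Rightarrow> enat" where
  "covering_number H = cover_number H (\<lambda>_. True)"

definition cyclic_covering_number :: "('b, 'd) monoid_scheme \<Rightarrow> enat" where
  "cyclic_covering_number H = cover_number H (\<lambda>K. \<exists>g\<in>carrier H. K = generate H {g})"

end

theory Submission
  imports Defs
begin

text \<open>Both inequalities come from comparing the admissible covers: every cover by proper
  subgroups admitting local sections is a cover by proper subgroups, and local
  sectionability provides a local section on every cyclic subgroup, since a local section
  restricts to any smaller subgroup. The final clause is then antisymmetry.\<close>

lemma cover_number_antimono:
  assumes "\<And>K. subgroup K H \<Longrightarrow> Q K \<Longrightarrow> P K"
  shows "cover_number H P \<le> cover_number H Q"
  unfolding cover_number_def
  by (rule Inf_superset_mono) (use assms in blast)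

lemma local_section_on_subset:
  assumes "local_section_on G H f L" and "L' \<subseteq> L"
  shows "local_section_on G H f L'"
proof -
  obtain s where s: "s \<in> hom (H\<lparr>carrier := L\<rparr>) G" "\<forall>x\<in>L. f (s x) = x"
    using assms(1) unfolding local_section_on_def by blast
  have "s \<in> hom (H\<lparr>carrier := L'\<rparr>) G"
    using s(1) assms(2) unfolding hom_def Pi_def by auto
  with s(2) assms(2) show ?thesis
    unfolding local_section_on_def by blast
qed

lemma local_section_on_trivial:
  assumes "group_hom G H f"
  shows "local_section_on G H f {\<one>\<^bsub>H\<^esub>}"
proof -
  interpret group_hom G H f by fact
  have "(\<lambda>_. \<one>\<^bsub>G\<^esub>) \<in> hom (H\<lparr>carrier := {\<one>\<^bsub>H\<^esub>}\<rparr>) G"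
    unfolding hom_def by auto
  then show ?thesis
    unfolding local_section_on_def by auto
qed

lemma local_section_on_cyclic:
  assumes "group_hom G H f" and "locally_sectionable G H f" and "g \<in> carrier H"
  shows "local_section_on G H f (generate H {g})"
proof -
  interpret group_hom G H f by fact
  show ?thesis
  proof (cases "g = \<one>\<^bsub>H\<^esub>")
    case True
    then have "generate H {g} \<subseteq> {\<one>\<^bsub>H\<^esub>}"
      using H.generate_subgroup_incl H.triv_subgroup by blast
    then show ?thesis
      using local_section_on_subset local_section_on_trivial[OF assms(1)] by blast
  next
    case False
    then obtain L where L: "subgroup L H" "g \<in> L" "local_section_on G H f L"
      using assms(2,3) unfolding locally_sectionable_def by blast
    then have "generate H {g} \<subseteq> L"
      using H.generate_subgroup_incl by blast
    with L(3) show ?thesis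
      using local_section_on_subset by blast
  qed
qed

theorem corollary2p21:
  fixes G :: "('a, 'c) monoid_scheme" and H :: "('b, 'd) monoid_scheme" and f :: "'a \<Rightarrow> 'b"
  assumes "group G" and "group H" and "f \<in> hom G H"
    and "locally_sectionable G H f"
  shows "covering_number H \<le> sectional_number G H f
         \<and> sectional_number G H f \<le> cyclic_covering_number H
         \<and> (covering_number H = cyclic_covering_number H \<longrightarrow>
              sectional_number G H f = cyclic_covering_number H
              \<and> cyclic_covering_number H = covering_number H)"
proof -
  have hom: "group_hom G H f"
    using assms(1-3) by (simp add: group_hom_def group_hom_axioms_def)
  have lower: "covering_number H \<le> sectional_number G H f"
    unfolding covering_number_def sectional_number_def
    by (rule cover_number_antimono) simp
  have upper: "sectional_number G H f \<le> cyclic_covering_number H"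
    unfolding cyclic_covering_number_def sectional_number_def
    by (rule cover_number_antimono) (use local_section_on_cyclic[OF hom assms(4)] in blast)
  from lower upper show ?thesis
    by auto
qed

end
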